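(* For every finite forest $\mathcal{F}$ with at least one edge, the non-cover complex $\mathcal{NC}(\mathcal{F})$ is either contractible or homotopy equivalent to a sphere $\mathbb{S}^d$ for some $d\ge -1$ (with the convention $\mathbb{S}^{-1}=\emptyset$).
   Context: For a finite simple graph $H$, the non-cover complex $\mathcal{NC}(H)$ is the simplicial complex whose simplices are the subsets $S\subseteq V(H)$ such that $V(H)\setminus S$ contains both endpoints of some edge of $H$. Homotopy types refer to geometric realizations. *)

theory Defs
  imports "HOL-Analysis.Analysis"
begin

definition simple_graph :: "'a set \<Rightarrow> 'a set set \<Rightarrow> bool" where
  "simple_graph V E \<longleftrightarrow> finite V \<and> (\<forall>e\<in>E. e \<subseteq> V \<and> card e = 2)"

definition is_cycle :: "'a set set \<Rightarrow> 'a list \<Rightarrow> bool" where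
  "is_cycle E cs \<longleftrightarrow> length cs \<ge> 3 \<and> distinct cs \<and>
     (\<forall>i < length cs - 1. {cs ! i, cs ! (i+1)} \<in> E) \<and> {last cs, hd cs} \<in> E"

definition forest :: "'a set \<Rightarrow> 'a set set \<Rightarrow> bool" where
  "forest V E \<longleftrightarrow> simple_graph V E \<and> (\<nexists>cs. is_cycle E cs)"

definition non_cover_complex :: "'a set \<Rightarrow> 'a set set \<Rightarrow> 'a set set" where
  "non_cover_complex V E = {S. S \<subseteq> V \<and> (\<exists>e\<in>E. e \<subseteq> V - S)}"

text \<open>Geometric realization of a simplicial complex K on finite vertex set V,
  as a subspace of the function space 'a \<Rightarrow> real (product topology): all convex
  combinations of vertices whose support is a simplex of K.\<close>
definition geom_realization :: "'a set \<Rightarrow> 'a set set \<Rightarrow> ('a \<Rightarrow> real) set" where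
  "geom_realization V K = {f. (\<forall>v. 0 \<le> f v) \<and> (\<forall>v. v \<notin> V \<longrightarrow> f v = 0) \<and>
       (\<Sum>v\<in>V. f v) = 1 \<and> {v\<in>V. f v \<noteq> 0} \<in> K}"

text \<open>The d-sphere S^d (d \<ge> -1) as the unit sphere of R^(d+1), embedded in nat \<Rightarrow> real
  on coordinates 0..d; S^(-1) is empty.\<close>
definition std_sphere :: "int \<Rightarrow> (nat \<Rightarrow> real) set" where
  "std_sphere d = {x. (\<forall>i. int i > d \<longrightarrow> x i = 0) \<and> (\<Sum>i\<in>{i. int i \<le> d}. (x i)\<^sup>2) = 1}"

end

theory Submission
  imports Defs
begin

text \<open>
  The geometric realization of the non-cover complex is the set of probability vectors on V
  that vanish on some edge. We argue by induction on the number of vertices plus edges, over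
  cycle-free graphs whose edges have at most two vertices. If some vertex lies on no edge, the
  space is a cone over that vertex. An edge containing another edge can be discarded. If every
  edge through l also contains some u \<noteq> l (as for a leaf l with neighbour u), moving the weight
  of u onto l is a straight-line deformation retraction onto the space of the graph with u
  deleted. Otherwise all edges are singletons covering V, and the space is the boundary of the
  simplex, which radial projection from the barycentre identifies with the sphere of dimension
  card V - 2. One of these cases always occurs, because in a cycle-free graph every edge through
  the first vertex of a longest path contains the second vertex.
\<close>

section \<open>Topology of real-valued function spaces\<close>

lemma continuous_on_coordinate [continuous_intros]:
  "continuous_on S (\<lambda>x. x i :: 'b :: topological_space)"
  by (rule continuous_on_subset[OF continuous_on_product_coordinates]) simp

lemma continuous_map_coordinate:
  "continuous_map (top_of_set S) euclideanreal (\<lambda>x. x i)"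
  by (simp add: continuous_on_coordinate)

lemma continuous_on_Max:
  fixes f :: "'b \<Rightarrow> 'a :: topological_space \<Rightarrow> real"
  assumes "finite A" "A \<noteq> {}" "\<And>a. a \<in> A \<Longrightarrow> continuous_on S (f a)"
  shows "continuous_on S (\<lambda>x. Max ((\<lambda>a. f a x) ` A))"
  using assms
proof (induction A rule: finite_ne_induct)
  case (insert a A)
  then show ?case
    by (simp add: continuous_on_max)
qed simp

lemma continuous_map_into_function_set:
  fixes h :: "'b \<Rightarrow> 'a \<Rightarrow> real"
  assumes "\<And>x. x \<in> topspace X \<Longrightarrow> h x \<in> S"
    and "\<And>v. continuous_map X euclideanreal (\<lambda>x. h x v)"
  shows "continuous_map X (top_of_set S) h"
proof -
  have "continuous_map X euclidean h"
    using assms(2) by (simp add: continuous_map_componentwise_UNIV flip: euclidean_product_topology)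
  then show ?thesis
    using assms(1) by (auto simp: continuous_map_in_subtopology)
qed

lemma homeomorphic_function_sets:
  fixes S :: "('a \<Rightarrow> real) set" and T :: "('b \<Rightarrow> real) set"
  assumes "\<And>x. x \<in> S \<Longrightarrow> f x \<in> T" "\<And>y. y \<in> T \<Longrightarrow> g y \<in> S"
    and "\<And>x. x \<in> S \<Longrightarrow> g (f x) = x" "\<And>y. y \<in> T \<Longrightarrow> f (g y) = y"
    and "\<And>w. continuous_on S (\<lambda>x. f x w)" and "\<And>v. continuous_on T (\<lambda>y. g y v)"
  shows "top_of_set S homeomorphic_space top_of_set T"
proof (rule homeomorphic_maps_imp_homeomorphic_space)
  show "homeomorphic_maps (top_of_set S) (top_of_set T) f g"
    unfolding homeomorphic_maps_def
    using assms by (intro conjI continuous_map_into_function_set) auto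
qed

lemma homeomorphic_level_sets_homogeneous:
  fixes C :: "('a \<Rightarrow> real) set" and p q :: "('a \<Rightarrow> real) \<Rightarrow> real"
  assumes cone: "\<And>z t. z \<in> C \<Longrightarrow> 0 < t \<Longrightarrow> (\<lambda>i. t * z i) \<in> C"
    and p_hom: "\<And>z t. z \<in> C \<Longrightarrow> 0 < t \<Longrightarrow> p (\<lambda>i. t * z i) = t * p z"
    and q_hom: "\<And>z t. z \<in> C \<Longrightarrow> 0 < t \<Longrightarrow> q (\<lambda>i. t * z i) = t * q z"
    and q_pos: "\<And>z. z \<in> C \<Longrightarrow> p z = 1 \<Longrightarrow> 0 < q z"
    and p_pos: "\<And>z. z \<in> C \<Longrightarrow> q z = 1 \<Longrightarrow> 0 < p z"
    and cont: "continuous_on C p" "continuous_on C q"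
  shows "top_of_set {z \<in> C. p z = 1} homeomorphic_space top_of_set {z \<in> C. q z = 1}"
proof (rule homeomorphic_function_sets)
  let ?P = "{z \<in> C. p z = 1}" and ?Q = "{z \<in> C. q z = 1}"
  let ?f = "\<lambda>z i. inverse (q z) * z i" and ?g = "\<lambda>z i. inverse (p z) * z i"
  show "?f z \<in> ?Q" and "?g (?f z) = z" if "z \<in> ?P" for z
    using that cone p_hom q_hom q_pos[of z] by auto
  show "?g z \<in> ?P" and "?f (?g z) = z" if "z \<in> ?Q" for z
    using that cone p_hom q_hom p_pos[of z] by auto
  show "continuous_on ?P (\<lambda>z. ?f z i)" for i
    using q_pos by (intro continuous_intros continuous_on_subset[OF cont(2)]) force+
  show "continuous_on ?Q (\<lambda>z. ?g z i)" for i
    using p_pos by (intro continuous_intros continuous_on_subset[OF cont(1)]) force+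
qed

lemma homotopy_equivalent_straight_line_retraction:
  fixes S T :: "('a \<Rightarrow> real) set"
  assumes "T \<subseteq> S" and r_in: "\<And>x. x \<in> S \<Longrightarrow> r x \<in> T" and r_id: "\<And>y. y \<in> T \<Longrightarrow> r y = y"
    and r_cont: "\<And>v. continuous_on S (\<lambda>x. r x v)"
    and segment: "\<And>x t. x \<in> S \<Longrightarrow> 0 \<le> t \<Longrightarrow> t \<le> 1 \<Longrightarrow> (\<lambda>v. (1 - t) * r x v + t * x v) \<in> S"
  shows "top_of_set S homotopy_equivalent_space top_of_set T"
proof (rule deformation_retract_imp_homotopy_equivalent_space)
  let ?X = "prod_topology (top_of_set {0..1::real}) (top_of_set S)"
  let ?h = "\<lambda>(t, x) v. (1 - t) * r x v + t * x v"
  have "continuous_map ?X euclideanreal fst"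
    using continuous_map_compose[OF continuous_map_fst continuous_map_from_subtopology[OF continuous_map_id]]
    unfolding o_def id_def .
  moreover have "continuous_map ?X euclideanreal (\<lambda>p. snd p v)" for v
    using continuous_map_compose[OF continuous_map_snd continuous_map_coordinate]
    unfolding o_def .
  moreover have "continuous_map ?X euclideanreal (\<lambda>p. r (snd p) v)" for v
  proof -
    have "continuous_map (top_of_set S) euclideanreal (\<lambda>x. r x v)"
      using r_cont by simp
    from continuous_map_compose[OF continuous_map_snd this] show ?thesis
      unfolding o_def .
  qed
  ultimately have "continuous_map ?X euclideanreal (\<lambda>p. (1 - fst p) * r (snd p) v + fst p * snd p v)" for v
    by (intro continuous_intros)
  then have "continuous_map ?X (top_of_set S) ?h"
    using segment by (intro continuous_map_into_function_set) (auto simp: case_prod_beta)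
  then show "homotopic_with (\<lambda>x. True) (top_of_set S) (top_of_set S) r id"
    unfolding homotopic_with_def by (intro exI[of _ ?h]) auto
  have "continuous_map (top_of_set S) (top_of_set T) r"
    using r_in r_cont by (intro continuous_map_into_function_set) auto
  moreover have "continuous_map (top_of_set T) (top_of_set S) id"
    using \<open>T \<subseteq> S\<close> continuous_map_from_subtopology[OF continuous_map_id]
    by (auto simp: continuous_map_in_subtopology)
  ultimately show "retraction_maps (top_of_set S) (top_of_set T) r id"
    unfolding retraction_maps_def using r_id by auto
qed

section \<open>Simplices and non-cover spaces\<close>

definition standard_simplex :: "'a set \<Rightarrow> ('a \<Rightarrow> real) set" where
  "standard_simplex V = {x. (\<forall>v. 0 \<le> x v) \<and> (\<forall>v. v \<notin> V \<longrightarrow> x v = 0) \<and> (\<Sum>v\<in>V. x v) = 1}"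

definition simplex_boundary :: "'a set \<Rightarrow> ('a \<Rightarrow> real) set" where
  "simplex_boundary V = {x \<in> standard_simplex V. \<exists>v\<in>V. x v = 0}"

lemma standard_simplex_convex_combination:
  assumes "x \<in> standard_simplex V" "y \<in> standard_simplex V" "0 \<le> t" "t \<le> 1"
  shows "(\<lambda>v. (1 - t) * x v + t * y v) \<in> standard_simplex V"
proof -
  have "(\<Sum>v\<in>V. (1 - t) * x v + t * y v) = (1 - t) * (\<Sum>v\<in>V. x v) + t * (\<Sum>v\<in>V. y v)"
    by (simp add: sum.distrib sum_distrib_left)
  then show ?thesis
    using assms unfolding standard_simplex_def by simp
qed

lemma standard_simplex_Diff_vertex:
  assumes "finite V"
  shows "standard_simplex (V - {u}) = {x \<in> standard_simplex V. x u = 0}"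
proof -
  have "(\<Sum>v\<in>V - {u}. x v) = (\<Sum>v\<in>V. x v)" if "x u = 0" for x :: "_ \<Rightarrow> real"
    using that assms by (cases "u \<in> V") (simp_all add: sum.remove)
  then show ?thesis
    unfolding standard_simplex_def by auto
qed

definition noncover_space :: "'a set \<Rightarrow> 'a set set \<Rightarrow> ('a \<Rightarrow> real) set" where
  "noncover_space V E = {x \<in> standard_simplex V. \<exists>e\<in>E. e \<subseteq> V \<and> (\<forall>v\<in>e. x v = 0)}"

lemma geom_realization_non_cover_complex:
  "geom_realization V (non_cover_complex V E) = noncover_space V E"
  unfolding geom_realization_def non_cover_complex_def noncover_space_def standard_simplex_def
  by blast

lemma noncover_space_singletons: "noncover_space V ((\<lambda>v. {v}) ` V) = simplex_boundary V"
  unfolding noncover_space_def simplex_boundary_def by blast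

lemma noncover_space_Diff_superset_edge:
  assumes "e1 \<in> E" "e1 \<subset> e2"
  shows "noncover_space V (E - {e2}) = noncover_space V E"
  using assms unfolding noncover_space_def by blast

lemma contractible_noncover_space_isolated_vertex:
  assumes "u \<in> V" "\<forall>e\<in>E. u \<notin> e"
  shows "contractible_space (top_of_set (noncover_space V E))"
proof (cases "noncover_space V E = {}")
  case False
  define a where "a v = (if v = u then 1 else 0 :: real)" for v
  obtain x0 e0 where "x0 \<in> standard_simplex V" "e0 \<in> E" "e0 \<subseteq> V"
    using False unfolding noncover_space_def by auto
  moreover from \<open>x0 \<in> standard_simplex V\<close> have "finite V"
    unfolding standard_simplex_def by (cases "finite V") auto
  ultimately have a: "a \<in> noncover_space V E"
    using assms unfolding noncover_space_def standard_simplex_def a_def by auto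
  have "top_of_set (noncover_space V E) homotopy_equivalent_space top_of_set {a}"
  proof (rule homotopy_equivalent_straight_line_retraction)
    fix x t assume x: "x \<in> noncover_space V E" and t: "0 \<le> (t::real)" "t \<le> 1"
    then obtain e where e: "e \<in> E" "e \<subseteq> V" "\<forall>v\<in>e. x v = 0"
      unfolding noncover_space_def by blast
    have "(\<lambda>v. (1 - t) * a v + t * x v) \<in> standard_simplex V"
      using a x t by (intro standard_simplex_convex_combination) (auto simp: noncover_space_def)
    moreover have "\<forall>v\<in>e. (1 - t) * a v + t * x v = 0"
      using assms e unfolding a_def by auto
    ultimately show "(\<lambda>v. (1 - t) * (\<lambda>_. a) x v + t * x v) \<in> noncover_space V E"
      using e unfolding noncover_space_def by blast
  qed (use a in simp_all)
  moreover have "contractible_space (top_of_set {a})"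
    by (simp add: contractible_space_singleton)
  ultimately show ?thesis
    using homotopy_equivalent_space_contractibility by blast
qed simp

lemma noncover_space_delete_vertex:
  assumes "finite V" "u \<in> V"
  shows "noncover_space (V - {u}) ((\<lambda>e. e - {u}) ` E) = {x \<in> noncover_space V E. x u = 0}"
proof
  show "noncover_space (V - {u}) ((\<lambda>e. e - {u}) ` E) \<subseteq> {x \<in> noncover_space V E. x u = 0}"
  proof
    fix y assume "y \<in> noncover_space (V - {u}) ((\<lambda>e. e - {u}) ` E)"
    then obtain e where "y \<in> standard_simplex V" "y u = 0" "e \<in> E" "e - {u} \<subseteq> V - {u}"
      "\<forall>v\<in>e - {u}. y v = 0"
      unfolding noncover_space_def standard_simplex_Diff_vertex[OF \<open>finite V\<close>] by blast
    moreover from this have "e \<subseteq> V" "\<forall>v\<in>e. y v = 0"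
      using \<open>u \<in> V\<close> by auto
    ultimately show "y \<in> {x \<in> noncover_space V E. x u = 0}"
      unfolding noncover_space_def by blast
  qed
  show "{x \<in> noncover_space V E. x u = 0} \<subseteq> noncover_space (V - {u}) ((\<lambda>e. e - {u}) ` E)"
  proof
    fix x assume "x \<in> {x \<in> noncover_space V E. x u = 0}"
    then obtain e where "x \<in> standard_simplex (V - {u})" "e \<in> E" "e \<subseteq> V" "\<forall>v\<in>e. x v = 0"
      unfolding noncover_space_def standard_simplex_Diff_vertex[OF \<open>finite V\<close>] by blast
    moreover from this have "e - {u} \<in> (\<lambda>e. e - {u}) ` E" "e - {u} \<subseteq> V - {u}"
      by auto
    ultimately show "x \<in> noncover_space (V - {u}) ((\<lambda>e. e - {u}) ` E)"
      unfolding noncover_space_def by blast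
  qed
qed

lemma noncover_space_delete_dominating_vertex:
  assumes "finite V" "l \<in> V" "u \<in> V" "l \<noteq> u" and dominated: "\<forall>e\<in>E. l \<in> e \<longrightarrow> u \<in> e"
  shows "top_of_set (noncover_space V E) homotopy_equivalent_space
         top_of_set (noncover_space (V - {u}) ((\<lambda>e. e - {u}) ` E))"
  unfolding noncover_space_delete_vertex[OF \<open>finite V\<close> \<open>u \<in> V\<close>]
proof (rule homotopy_equivalent_straight_line_retraction)
  define r where "r x v = x v + x u * ((if v = l then 1 else 0) - (if v = u then 1 else 0))"
    for x :: "_ \<Rightarrow> real" and v
  have r_simplex: "r x \<in> standard_simplex V" if "x \<in> standard_simplex V" for x
  proof -
    have "(\<Sum>v\<in>V. r x v) = (\<Sum>v\<in>V. x v)"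
      using assms by (simp add: r_def sum.distrib sum_subtractf flip: sum_distrib_left)
    moreover have "0 \<le> r x v" for v
      using that assms by (auto simp: r_def standard_simplex_def)
    ultimately show ?thesis
      using that assms by (auto simp: r_def standard_simplex_def)
  qed
  have r_vanishes: "\<forall>v\<in>e. r x v = 0" if "e \<in> E" "\<forall>v\<in>e. x v = 0" for x e
    using that dominated by (cases "u \<in> e") (auto simp: r_def)
  have segment: "(\<lambda>v. (1 - t) * r x v + t * x v) \<in> noncover_space V E"
    if x: "x \<in> noncover_space V E" and t: "0 \<le> t" "t \<le> 1" for x t
  proof -
    obtain e where e: "e \<in> E" "e \<subseteq> V" "\<forall>v\<in>e. x v = 0"
      using x unfolding noncover_space_def by blast
    have "(\<lambda>v. (1 - t) * r x v + t * x v) \<in> standard_simplex V"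
      using x t r_simplex by (intro standard_simplex_convex_combination) (auto simp: noncover_space_def)
    moreover have "\<forall>v\<in>e. (1 - t) * r x v + t * x v = 0"
      using e r_vanishes[OF e(1,3)] by simp
    ultimately show ?thesis
      using e unfolding noncover_space_def by blast
  qed
  show "(\<lambda>v. (1 - t) * r x v + t * x v) \<in> noncover_space V E"
    if "x \<in> noncover_space V E" "0 \<le> t" "t \<le> 1" for x t
    using segment that .
  show "r x \<in> {x \<in> noncover_space V E. x u = 0}" if "x \<in> noncover_space V E" for x
  proof -
    have "r x \<in> noncover_space V E"
      using segment[OF that, of 0] by simp
    moreover have "r x u = 0"
      using assms by (simp add: r_def)
    ultimately show ?thesis
      by simp
  qed
  show "r y = y" if "y \<in> {x \<in> noncover_space V E. x u = 0}" for y
    using that by (simp add: r_def fun_eq_iff)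
  show "continuous_on (noncover_space V E) (\<lambda>x. r x v)" for v
    unfolding r_def by (intro continuous_intros)
qed blast

section \<open>The boundary of a simplex is a sphere\<close>

definition sum_zero_vectors :: "nat \<Rightarrow> (nat \<Rightarrow> real) set" where
  "sum_zero_vectors n = {z. (\<forall>i\<ge>n. z i = 0) \<and> (\<Sum>i<n. z i) = 0}"

lemma std_sphere_eq: "std_sphere (int m - 1) = {y. (\<forall>i\<ge>m. y i = 0) \<and> (\<Sum>i<m. (y i)\<^sup>2) = 1}"
proof -
  have "{i. int i \<le> int m - 1} = {..<m}"
    by auto
  then show ?thesis
    unfolding std_sphere_def by force
qed

lemma simplex_boundary_reindex_homeomorphic:
  assumes "bij_betw \<sigma> A B"
  shows "top_of_set (simplex_boundary B) homeomorphic_space top_of_set (simplex_boundary A)"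
proof (rule homeomorphic_function_sets)
  let ?f = "\<lambda>x i. if i \<in> A then x (\<sigma> i) else 0"
  let ?g = "\<lambda>y v. if v \<in> B then y (inv_into A \<sigma> v) else 0"
  have \<sigma>: "\<sigma> i \<in> B" "inv_into A \<sigma> (\<sigma> i) = i" if "i \<in> A" for i
    using that assms by (auto simp: bij_betw_def)
  have \<tau>: "inv_into A \<sigma> v \<in> A" "\<sigma> (inv_into A \<sigma> v) = v" if "v \<in> B" for v
    using that assms by (auto simp: bij_betw_def inv_into_into f_inv_into_f)
  have sum_reindex: "(\<Sum>v\<in>B. h v) = (\<Sum>i\<in>A. h (\<sigma> i))" for h :: "_ \<Rightarrow> real"
    using sum.reindex_bij_betw[OF assms] by metis
  show "?f x \<in> simplex_boundary A" if "x \<in> simplex_boundary B" for x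
    using that \<sigma> \<tau> unfolding simplex_boundary_def standard_simplex_def sum_reindex by (auto cong: sum.cong) metis
  show "?g y \<in> simplex_boundary B" if "y \<in> simplex_boundary A" for y
    using that \<sigma> \<tau> unfolding simplex_boundary_def standard_simplex_def sum_reindex by (auto cong: sum.cong) metis
  show "?g (?f x) = x" if "x \<in> simplex_boundary B" for x
    using that \<tau> unfolding simplex_boundary_def standard_simplex_def by fastforce
  show "?f (?g y) = y" if "y \<in> simplex_boundary A" for y
    using that \<sigma> unfolding simplex_boundary_def standard_simplex_def by fastforce
  show "continuous_on (simplex_boundary B) (\<lambda>x. ?f x w)" for w
    by (cases "w \<in> A") (simp_all add: continuous_on_coordinate)
  show "continuous_on (simplex_boundary A) (\<lambda>y. ?g y v)" for v
    by (cases "v \<in> B") (simp_all add: continuous_on_coordinate)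
qed

lemma simplex_boundary_homeomorphic_Max_level:
  assumes "n > 0"
  shows "top_of_set (simplex_boundary {..<n}) homeomorphic_space
         top_of_set {z \<in> sum_zero_vectors n. Max ((\<lambda>i. - z i) ` {..<n}) = 1}"
proof (rule homeomorphic_function_sets)
  let ?f = "\<lambda>x i. if i < n then real n * x i - 1 else 0"
  let ?g = "\<lambda>z i. if i < n then (z i + 1) / real n else 0"
  have fin: "finite ((\<lambda>i. - z i) ` {..<n})" "(\<lambda>i. - z i) ` {..<n} \<noteq> {}" for z :: "nat \<Rightarrow> real"
    using assms by auto
  show "?f x \<in> {z \<in> sum_zero_vectors n. Max ((\<lambda>i. - z i) ` {..<n}) = 1}"
    if x: "x \<in> simplex_boundary {..<n}" for x
  proof -
    have "(\<Sum>i<n. ?f x i) = real n * (\<Sum>i<n. x i) - real n"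
      by (simp add: sum_subtractf sum_distrib_left)
    then have "?f x \<in> sum_zero_vectors n"
      using x unfolding simplex_boundary_def standard_simplex_def sum_zero_vectors_def by simp
    moreover have "Max ((\<lambda>i. - ?f x i) ` {..<n}) = 1"
      using x unfolding simplex_boundary_def standard_simplex_def by (intro Max_eqI) force+
    ultimately show ?thesis
      by simp
  qed
  show "?g z \<in> simplex_boundary {..<n}"
    if z: "z \<in> {z \<in> sum_zero_vectors n. Max ((\<lambda>i. - z i) ` {..<n}) = 1}" for z
  proof -
    have "- z i \<le> 1" if "i < n" for i
      using z Max_ge[OF fin(1)[of z], of "- z i"] that by auto
    moreover have "\<exists>i<n. - z i = 1"
      using z Max_in[OF fin[of z]] by force
    moreover have "(\<Sum>i<n. ?g z i) = ((\<Sum>i<n. z i) + real n) / real n"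
      by (simp add: add_divide_distrib sum.distrib flip: sum_divide_distrib)
    ultimately show ?thesis
      using z assms unfolding simplex_boundary_def standard_simplex_def sum_zero_vectors_def by force
  qed
  show "?g (?f x) = x" if "x \<in> simplex_boundary {..<n}" for x
    using that assms unfolding simplex_boundary_def standard_simplex_def by force
  show "?f (?g z) = z" if "z \<in> {z \<in> sum_zero_vectors n. Max ((\<lambda>i. - z i) ` {..<n}) = 1}" for z
    using that assms unfolding sum_zero_vectors_def by force
  show "continuous_on (simplex_boundary {..<n}) (\<lambda>x. ?f x i)" for i
    by (cases "i < n") (auto intro!: continuous_intros)
  show "continuous_on {z \<in> sum_zero_vectors n. Max ((\<lambda>i. - z i) ` {..<n}) = 1} (\<lambda>z. ?g z i)" for i
    by (cases "i < n") (auto intro!: continuous_intros)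
qed

lemma sum_zero_vectors_Max_level_homeomorphic_norm_level:
  "top_of_set {z \<in> sum_zero_vectors (Suc m). Max ((\<lambda>i. - z i) ` {..<Suc m}) = 1} homeomorphic_space
   top_of_set {z \<in> sum_zero_vectors (Suc m). sqrt (\<Sum>i<m. (z i)\<^sup>2) = 1}"
  (is "top_of_set {z \<in> ?C. ?p z = 1} homeomorphic_space top_of_set {z \<in> ?C. ?q z = 1}")
proof (rule homeomorphic_level_sets_homogeneous)
  have p_le_iff: "?p z \<le> c \<longleftrightarrow> (\<forall>i<Suc m. - z i \<le> c)" for z c
    by (subst Max_le_iff) auto
  have q_eq_0_iff: "?q z = 0 \<longleftrightarrow> (\<forall>i<m. z i = 0)" for z
    by (auto simp: sum_nonneg_eq_0_iff)
  have zero_if_head_zero: "\<forall>i<Suc m. z i = 0" if "z \<in> ?C" "\<forall>i<m. z i = 0" for z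
    using that unfolding sum_zero_vectors_def by (simp add: less_Suc_eq)
  have zero_if_nonneg: "\<forall>i<Suc m. z i = 0" if "z \<in> ?C" "\<forall>i<Suc m. 0 \<le> z i" for z
    using that sum_nonneg_eq_0_iff[of "{..<Suc m}" z] unfolding sum_zero_vectors_def by auto
  show "(\<lambda>i. t * z i) \<in> ?C" if "z \<in> ?C" "0 < t" for z t
    using that unfolding sum_zero_vectors_def by (simp del: sum.lessThan_Suc flip: sum_distrib_left)
  show "?p (\<lambda>i. t * z i) = t * ?p z" if "0 < t" for z t
  proof -
    have "mono ((*) t)"
      using that by (simp add: mono_def)
    then show ?thesis
      by (subst mono_Max_commute) (auto simp: image_image)
  qed
  show "?q (\<lambda>i. t * z i) = t * ?q z" if "0 < t" for z t
    using that by (simp add: power_mult_distrib real_sqrt_mult flip: sum_distrib_left)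
  show "0 < ?q z" if "z \<in> ?C" "?p z = 1" for z
  proof (rule ccontr)
    assume "\<not> 0 < ?q z"
    moreover have "0 \<le> ?q z"
      by (simp add: sum_nonneg)
    ultimately have "?q z = 0"
      by linarith
    then have "\<forall>i<Suc m. z i = 0"
      using zero_if_head_zero \<open>z \<in> ?C\<close> q_eq_0_iff by blast
    then have "?p z \<le> 0"
      by (subst p_le_iff) simp
    with \<open>?p z = 1\<close> show False
      by simp
  qed
  show "0 < ?p z" if "z \<in> ?C" "?q z = 1" for z
  proof (rule ccontr)
    assume "\<not> 0 < ?p z"
    then have "\<forall>i<Suc m. z i = 0"
      using zero_if_nonneg \<open>z \<in> ?C\<close> p_le_iff[of z 0] by (simp add: not_less)
    then have "?q z = 0"
      by (simp add: q_eq_0_iff)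
    with \<open>?q z = 1\<close> show False
      by simp
  qed
  show "continuous_on ?C ?p"
    by (rule continuous_on_Max) (auto intro!: continuous_on_minus continuous_on_coordinate)
  show "continuous_on ?C ?q"
    by (intro continuous_on_real_sqrt continuous_on_sum continuous_on_power continuous_on_coordinate)
qed

lemma sum_zero_vectors_norm_level_homeomorphic_sphere:
  "top_of_set {z \<in> sum_zero_vectors (Suc m). (\<Sum>i<m. (z i)\<^sup>2) = 1} homeomorphic_space
   top_of_set (std_sphere (int m - 1))"
  unfolding std_sphere_eq
proof (rule homeomorphic_function_sets)
  let ?f = "\<lambda>(z :: nat \<Rightarrow> real) i. if i < m then z i else 0"
  let ?g = "\<lambda>(y :: nat \<Rightarrow> real) i. if i < m then y i else if i = m then - (\<Sum>j<m. y j) else 0"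
  have last: "z m = - (\<Sum>j<m. z j)" if "z \<in> sum_zero_vectors (Suc m)" for z
    using that unfolding sum_zero_vectors_def by simp
  show "?f z \<in> {y. (\<forall>i\<ge>m. y i = 0) \<and> (\<Sum>i<m. (y i)\<^sup>2) = 1}"
    if "z \<in> {z \<in> sum_zero_vectors (Suc m). (\<Sum>i<m. (z i)\<^sup>2) = 1}" for z
    using that by simp
  show "?g y \<in> {z \<in> sum_zero_vectors (Suc m). (\<Sum>i<m. (z i)\<^sup>2) = 1}"
    if "y \<in> {y. (\<forall>i\<ge>m. y i = 0) \<and> (\<Sum>i<m. (y i)\<^sup>2) = 1}" for y
    using that unfolding sum_zero_vectors_def by simp
  show "?g (?f z) = z" if "z \<in> {z \<in> sum_zero_vectors (Suc m). (\<Sum>i<m. (z i)\<^sup>2) = 1}" for z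
    using that last[of z] unfolding sum_zero_vectors_def by fastforce
  show "?f (?g y) = y" if "y \<in> {y. (\<forall>i\<ge>m. y i = 0) \<and> (\<Sum>i<m. (y i)\<^sup>2) = 1}" for y
    using that by fastforce
  show "continuous_on {z \<in> sum_zero_vectors (Suc m). (\<Sum>i<m. (z i)\<^sup>2) = 1} (\<lambda>z. ?f z i)" for i
    by (cases "i < m") (auto intro!: continuous_intros)
  show "continuous_on {y. (\<forall>i\<ge>m. y i = 0) \<and> (\<Sum>i<m. (y i)\<^sup>2) = 1} (\<lambda>y. ?g y i)" for i
  proof -
    have "continuous_on S (\<lambda>y. - (\<Sum>j<m. y j))" for S :: "(nat \<Rightarrow> real) set"
      by (intro continuous_on_minus continuous_on_sum continuous_on_coordinate)
    then show ?thesis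
      by (cases "i < m"; cases "i = m") (simp_all add: continuous_on_coordinate)
  qed
qed

lemma simplex_boundary_homeomorphic_sphere:
  assumes "finite V" "V \<noteq> {}"
  shows "top_of_set (simplex_boundary V) homeomorphic_space top_of_set (std_sphere (int (card V) - 2))"
proof -
  obtain m where m: "card V = Suc m"
    using assms by (metis card_gt_0_iff gr0_implies_Suc)
  then obtain \<sigma> where \<sigma>: "bij_betw \<sigma> {..<Suc m} V"
    using ex_bij_betw_nat_finite[OF assms(1)] by (metis atLeast0LessThan)
  have "top_of_set (simplex_boundary V) homeomorphic_space top_of_set (simplex_boundary {..<Suc m})"
    using simplex_boundary_reindex_homeomorphic[OF \<sigma>] .
  also have "\<dots> homeomorphic_space
      top_of_set {z \<in> sum_zero_vectors (Suc m). Max ((\<lambda>i. - z i) ` {..<Suc m}) = 1}"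
    by (rule simplex_boundary_homeomorphic_Max_level) simp
  also have "\<dots> homeomorphic_space top_of_set {z \<in> sum_zero_vectors (Suc m). sqrt (\<Sum>i<m. (z i)\<^sup>2) = 1}"
    by (rule sum_zero_vectors_Max_level_homeomorphic_norm_level)
  also have "\<dots> homeomorphic_space top_of_set (std_sphere (int m - 1))"
    using sum_zero_vectors_norm_level_homeomorphic_sphere[of m] by simp
  finally show ?thesis
    using m by (simp add: algebra_simps)
qed

section \<open>Paths and cycles in forests of rank two\<close>

definition is_graph_path :: "'a set set \<Rightarrow> 'a list \<Rightarrow> bool" where
  "is_graph_path E p \<longleftrightarrow> distinct p \<and> 2 \<le> length p \<and> (\<forall>i < length p - 1. {p ! i, p ! Suc i} \<in> E)"

lemma is_graph_path_Cons:
  assumes "is_graph_path E p" "{y, p ! 0} \<in> E" "y \<notin> set p"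
  shows "is_graph_path E (y # p)"
  unfolding is_graph_path_def
proof (intro conjI allI impI)
  fix i assume "i < length (y # p) - 1"
  then show "{(y # p) ! i, (y # p) ! Suc i} \<in> E"
    using assms unfolding is_graph_path_def by (cases i) auto
qed (use assms in \<open>auto simp: is_graph_path_def\<close>)

lemma is_graph_path_length_le:
  assumes "is_graph_path E p" "set p \<subseteq> V" "finite V"
  shows "length p \<le> card V"
  using assms by (metis card_mono distinct_card is_graph_path_def)

lemma is_cycle_take_graph_path:
  assumes "is_graph_path E p" "2 \<le> j" "j < length p" "{p ! j, p ! 0} \<in> E"
  shows "is_cycle E (take (Suc j) p)"
proof -
  have "p \<noteq> []"
    using assms by auto
  then have "last (take (Suc j) p) = p ! j" "hd (take (Suc j) p) = p ! 0"
    using assms by (simp_all add: last_conv_nth hd_conv_nth)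
  then show ?thesis
    using assms unfolding is_cycle_def is_graph_path_def by auto
qed

lemma longest_graph_path_first_edge:
  assumes path: "is_graph_path E p" "set p \<subseteq> V"
    and longest: "\<And>q. set q \<subseteq> V \<Longrightarrow> is_graph_path E q \<Longrightarrow> length q \<le> length p"
    and acyclic: "\<nexists>cs. is_cycle E cs" and "{p ! 0, y} \<in> E" "y \<in> V" "y \<noteq> p ! 0"
  shows "y = p ! 1"
proof (rule ccontr)
  assume "y \<noteq> p ! 1"
  show False
  proof (cases "y \<in> set p")
    case False
    then have "is_graph_path E (y # p)"
      using path \<open>{p ! 0, y} \<in> E\<close> by (intro is_graph_path_Cons) (auto simp: insert_commute)
    then show False
      using longest[of "y # p"] path \<open>y \<in> V\<close> by simp
  next
    case True
    then obtain j where "j < length p" "p ! j = y"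
      by (meson in_set_conv_nth)
    moreover have "2 \<le> j"
    proof (rule ccontr)
      assume "\<not> 2 \<le> j"
      then have "j = 0 \<or> j = 1"
        by auto
      then show False
        using \<open>y \<noteq> p ! 0\<close> \<open>y \<noteq> p ! 1\<close> \<open>p ! j = y\<close> by auto
    qed
    ultimately have "is_cycle E (take (Suc j) p)"
      using path \<open>{p ! 0, y} \<in> E\<close> by (intro is_cycle_take_graph_path) (auto simp: insert_commute)
    then show False
      using acyclic by blast
  qed
qed

lemma dominated_vertex_exists:
  assumes "finite V" and edges: "\<forall>e\<in>E. e \<subseteq> V \<and> card e \<le> 2" and acyclic: "\<nexists>cs. is_cycle E cs"
    and antichain: "\<forall>e1\<in>E. \<forall>e2\<in>E. \<not> e1 \<subset> e2" and "{a, b} \<in> E" "a \<noteq> b"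
  obtains l u where "l \<noteq> u" "l \<in> V" "u \<in> V" "\<forall>e\<in>E. l \<in> e \<longrightarrow> u \<in> e"
proof -
  let ?P = "\<lambda>p. set p \<subseteq> V \<and> is_graph_path E p"
  have "?P [a, b]"
    using assms unfolding is_graph_path_def by auto
  moreover have "\<forall>p. ?P p \<longrightarrow> length p < Suc (card V)"
    using is_graph_path_length_le \<open>finite V\<close> by (meson le_imp_less_Suc)
  ultimately obtain p where p: "?P p" and longest: "\<And>q. ?P q \<Longrightarrow> length q \<le> length p"
    using ex_has_greatest_nat[of ?P "[a, b]" length] by blast
  define l u where "l = p ! 0" and "u = p ! 1"
  have "distinct p" "2 \<le> length p" "set p \<subseteq> V" "{l, u} \<in> E"
    using p unfolding is_graph_path_def l_def u_def by (auto dest!: spec[of _ 0])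
  moreover from \<open>2 \<le> length p\<close> have "0 < length p" "1 < length p"
    by auto
  ultimately have "l \<noteq> u" "l \<in> set p" "u \<in> set p"
    unfolding l_def u_def by (simp_all add: nth_eq_iff_index_eq)
  with \<open>set p \<subseteq> V\<close> have "l \<noteq> u" "l \<in> V" "u \<in> V"
    by auto
  moreover have "u \<in> e" if "e \<in> E" "l \<in> e" for e
  proof -
    have "e \<noteq> {l}"
    proof
      assume "e = {l}"
      then have "e \<subset> {l, u}"
        using \<open>l \<noteq> u\<close> by auto
      then show False
        using antichain \<open>{l, u} \<in> E\<close> \<open>e \<in> E\<close> by blast
    qed
    then obtain y where "y \<in> e" "y \<noteq> l"
      using \<open>l \<in> e\<close> by blast
    have "finite e" "card e \<le> 2"
      using edges \<open>e \<in> E\<close> \<open>finite V\<close> by (auto intro: finite_subset)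
    then have "e = {l, y}"
      using \<open>l \<in> e\<close> \<open>y \<in> e\<close> \<open>y \<noteq> l\<close> by (metis card_2_iff card_subset_eq empty_subsetI insert_subset le_antisym card_mono)
    moreover have "y \<in> V"
      using edges \<open>e \<in> E\<close> \<open>y \<in> e\<close> by blast
    ultimately have "y = u"
      using longest_graph_path_first_edge[OF _ _ longest acyclic] p \<open>e \<in> E\<close> \<open>y \<noteq> l\<close>
      unfolding l_def u_def by blast
    with \<open>y \<in> e\<close> show ?thesis
      by simp
  qed
  ultimately show ?thesis
    using that by blast
qed

lemma is_cycle_mono: "E' \<subseteq> E \<Longrightarrow> is_cycle E' cs \<Longrightarrow> is_cycle E cs"
  unfolding is_cycle_def by blast

lemma doubleton_in_image_Diff:
  assumes "\<forall>e\<in>E. finite e \<and> card e \<le> 2" "{a, b} \<in> (\<lambda>e. e - {u}) ` E" "a \<noteq> b"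
  shows "{a, b} \<in> E"
proof -
  obtain e where e: "e \<in> E" "{a, b} = e - {u}"
    using assms(2) by blast
  then have "a \<in> e" "b \<in> e" "a \<noteq> u" "b \<noteq> u"
    by blast+
  have "u \<notin> e"
  proof
    assume "u \<in> e"
    with \<open>a \<in> e\<close> \<open>b \<in> e\<close> have "card {a, b, u} \<le> card e"
      using assms(1) e(1) by (intro card_mono) auto
    moreover have "card {a, b, u} = 3"
      using \<open>a \<noteq> b\<close> \<open>a \<noteq> u\<close> \<open>b \<noteq> u\<close> by simp
    ultimately show False
      using assms(1) e(1) by fastforce
  qed
  then show ?thesis
    using e by simp
qed

lemma is_cycle_image_Diff_imp:
  assumes edges: "\<forall>e\<in>E. finite e \<and> card e \<le> 2" and cycle: "is_cycle ((\<lambda>e. e - {u}) ` E) cs"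
  shows "is_cycle E cs"
proof -
  have cs: "length cs \<ge> 3" "distinct cs" "cs \<noteq> []"
    using cycle unfolding is_cycle_def by auto
  have "{cs ! i, cs ! (i + 1)} \<in> E" if "i < length cs - 1" for i
  proof (rule doubleton_in_image_Diff[OF edges])
    show "{cs ! i, cs ! (i + 1)} \<in> (\<lambda>e. e - {u}) ` E"
      using cycle that unfolding is_cycle_def by blast
    show "cs ! i \<noteq> cs ! (i + 1)"
      using cs that by (simp add: nth_eq_iff_index_eq)
  qed
  moreover have "{last cs, hd cs} \<in> E"
  proof (rule doubleton_in_image_Diff[OF edges])
    show "{last cs, hd cs} \<in> (\<lambda>e. e - {u}) ` E"
      using cycle unfolding is_cycle_def by blast
    have "cs ! (length cs - 1) \<noteq> cs ! 0"
      using cs by (subst nth_eq_iff_index_eq) auto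
    then show "last cs \<noteq> hd cs"
      using cs by (simp add: last_conv_nth hd_conv_nth)
  qed
  ultimately show ?thesis
    using cs unfolding is_cycle_def by blast
qed

definition rank2_forest :: "'a set \<Rightarrow> 'a set set \<Rightarrow> bool" where
  "rank2_forest V E \<longleftrightarrow> finite V \<and> (\<forall>e\<in>E. e \<subseteq> V \<and> card e \<le> 2) \<and> (\<nexists>cs. is_cycle E cs)"

lemma
  assumes "rank2_forest V E"
  shows rank2_forest_finite: "finite V"
    and rank2_forest_edges: "\<forall>e\<in>E. e \<subseteq> V \<and> card e \<le> 2"
    and rank2_forest_acyclic: "\<nexists>cs. is_cycle E cs"
    and rank2_forest_finite_edges: "finite E"
proof -
  show "finite V" "\<forall>e\<in>E. e \<subseteq> V \<and> card e \<le> 2" "\<nexists>cs. is_cycle E cs"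
    using assms unfolding rank2_forest_def by auto
  then have "E \<subseteq> Pow V"
    by blast
  then show "finite E"
    by (rule finite_subset) (simp add: \<open>finite V\<close>)
qed

lemma forest_imp_rank2_forest: "forest V E \<Longrightarrow> rank2_forest V E"
  unfolding forest_def simple_graph_def rank2_forest_def by auto

lemma rank2_forest_Diff_edge: "rank2_forest V E \<Longrightarrow> rank2_forest V (E - {e})"
  unfolding rank2_forest_def by (meson DiffD1 Diff_subset is_cycle_mono)

lemma rank2_forest_delete_vertex:
  assumes "rank2_forest V E"
  shows "rank2_forest (V - {u}) ((\<lambda>e. e - {u}) ` E)"
proof -
  have "\<forall>e\<in>E. finite e \<and> card e \<le> 2"
    using rank2_forest_edges[OF assms] rank2_forest_finite[OF assms] by (auto intro: finite_subset)
  then have "\<nexists>cs. is_cycle ((\<lambda>e. e - {u}) ` E) cs"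
    using rank2_forest_acyclic[OF assms] is_cycle_image_Diff_imp by metis
  moreover have "\<forall>e\<in>(\<lambda>e. e - {u}) ` E. e \<subseteq> V - {u} \<and> card e \<le> 2"
    using rank2_forest_edges[OF assms] by (auto intro: card_Diff1_le[THEN order_trans])
  ultimately show ?thesis
    using rank2_forest_finite[OF assms] unfolding rank2_forest_def by simp
qed

lemma noncover_space_reduction_cases:
  assumes "rank2_forest V E"
  obtains (empty) "V = {}"
    | (isolated) u where "u \<in> V" "\<forall>e\<in>E. u \<notin> e"
    | (nested) e1 e2 where "e1 \<in> E" "e2 \<in> E" "e1 \<subset> e2"
    | (dominated) l u where "l \<noteq> u" "l \<in> V" "u \<in> V" "\<forall>e\<in>E. l \<in> e \<longrightarrow> u \<in> e"
    | (boundary) "V \<noteq> {}" "E = (\<lambda>v. {v}) ` V"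
proof (cases "V = {} \<or> (\<exists>u\<in>V. \<forall>e\<in>E. u \<notin> e) \<or> (\<exists>e1\<in>E. \<exists>e2\<in>E. e1 \<subset> e2)")
  case True
  then show ?thesis
    using that by blast
next
  case False
  note fin = rank2_forest_finite[OF assms] and edges = rank2_forest_edges[OF assms]
  from False have "V \<noteq> {}" and covered: "\<forall>v\<in>V. \<exists>e\<in>E. v \<in> e" and antichain: "\<forall>e1\<in>E. \<forall>e2\<in>E. \<not> e1 \<subset> e2"
    by blast+
  have "{} \<notin> E"
  proof
    assume "{} \<in> E"
    obtain v e where "v \<in> V" "e \<in> E" "v \<in> e"
      using \<open>V \<noteq> {}\<close> covered by blast
    then show False
      using antichain \<open>{} \<in> E\<close> by blast
  qed
  show ?thesis
  proof (cases "\<exists>e\<in>E. card e = 2")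
    case True
    then obtain a b where "{a, b} \<in> E" "a \<noteq> b"
      by (metis card_2_iff)
    then show ?thesis
      using dominated_vertex_exists[OF fin edges rank2_forest_acyclic[OF assms] antichain] that by metis
  next
    case False
    have singleton: "\<exists>v\<in>V. e = {v}" if "e \<in> E" for e
    proof -
      have "finite e" "e \<subseteq> V" "card e \<le> 2" "e \<noteq> {}" "card e \<noteq> 2"
        using that edges False \<open>{} \<notin> E\<close> fin by (auto intro: finite_subset)
      then have "card e = 1"
        by (simp add: le_Suc_eq numeral_2_eq_2)
      then show ?thesis
        using \<open>e \<subseteq> V\<close> by (auto simp: card_1_singleton_iff)
    qed
    have "E = (\<lambda>v. {v}) ` V"
    proof
      show "E \<subseteq> (\<lambda>v. {v}) ` V"
        using singleton by blast
      show "(\<lambda>v. {v}) ` V \<subseteq> E"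
        using covered singleton by fastforce
    qed
    then show ?thesis
      using \<open>V \<noteq> {}\<close> that by blast
  qed
qed

section \<open>Contractible or a sphere\<close>

definition contractible_or_sphere :: "'a topology \<Rightarrow> bool" where
  "contractible_or_sphere X \<longleftrightarrow>
     contractible_space X \<or> (\<exists>d::int. d \<ge> -1 \<and> X homotopy_equivalent_space top_of_set (std_sphere d))"

lemma contractible_or_sphere_homotopy_equivalent:
  assumes "X homotopy_equivalent_space Y" "contractible_or_sphere Y"
  shows "contractible_or_sphere X"
  using assms homotopy_equivalent_space_contractibility homotopy_eqv_trans
  unfolding contractible_or_sphere_def by metis

lemma contractible_or_sphere_simplex_boundary:
  assumes "finite V" "V \<noteq> {}"
  shows "contractible_or_sphere (top_of_set (simplex_boundary V))"
proof -
  have "card V \<ge> 1"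
    using assms by (simp add: Suc_le_eq card_gt_0_iff)
  then have "int (card V) - 2 \<ge> -1"
    by linarith
  moreover have "top_of_set (simplex_boundary V) homotopy_equivalent_space
      top_of_set (std_sphere (int (card V) - 2))"
    using simplex_boundary_homeomorphic_sphere[OF assms] homeomorphic_imp_homotopy_equivalent_space by blast
  ultimately show ?thesis
    unfolding contractible_or_sphere_def by blast
qed

lemma contractible_or_sphere_noncover_space:
  assumes "rank2_forest V E"
  shows "contractible_or_sphere (top_of_set (noncover_space V E))"
  using assms
proof (induction "card V + card E" arbitrary: V E rule: less_induct)
  case less
  note fin = rank2_forest_finite[OF less.prems] and fin_edges = rank2_forest_finite_edges[OF less.prems]
  from less.prems show ?case
  proof (cases rule: noncover_space_reduction_cases)
    case empty
    then have "noncover_space V E = {}"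
      by (simp add: noncover_space_def standard_simplex_def)
    then show ?thesis
      by (simp add: contractible_or_sphere_def)
  next
    case (isolated u)
    then have "contractible_space (top_of_set (noncover_space V E))"
      by (rule contractible_noncover_space_isolated_vertex)
    then show ?thesis
      unfolding contractible_or_sphere_def ..
  next
    case (nested e1 e2)
    have "card (E - {e2}) < card E"
      using fin_edges \<open>e2 \<in> E\<close> by (rule card_Diff1_less)
    then have "contractible_or_sphere (top_of_set (noncover_space V (E - {e2})))"
      using less.hyps[of V "E - {e2}"] rank2_forest_Diff_edge[OF less.prems] by simp
    then show ?thesis
      using noncover_space_Diff_superset_edge[OF \<open>e1 \<in> E\<close> \<open>e1 \<subset> e2\<close>] by simp
  next
    case (dominated l u)
    let ?E' = "(\<lambda>e. e - {u}) ` E"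
    have "card (V - {u}) < card V"
      using fin \<open>u \<in> V\<close> by (rule card_Diff1_less)
    moreover have "card ?E' \<le> card E"
      using fin_edges by (rule card_image_le)
    ultimately have "contractible_or_sphere (top_of_set (noncover_space (V - {u}) ?E'))"
      using less.hyps[of "V - {u}" ?E'] rank2_forest_delete_vertex[OF less.prems] by simp
    with noncover_space_delete_dominating_vertex[OF fin dominated(2,3,1,4)] show ?thesis
      by (rule contractible_or_sphere_homotopy_equivalent)
  next
    case boundary
    then show ?thesis
      using contractible_or_sphere_simplex_boundary[OF fin] by (simp add: noncover_space_singletons)
  qed
qed

theorem corollary4p3:
  fixes V :: "'a set" and E :: "'a set set"
  assumes "forest V E" and "E \<noteq> {}"
  shows "contractible_space (top_of_set (geom_realization V (non_cover_complex V E)))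
         \<or> (\<exists>d::int. d \<ge> -1 \<and>
              top_of_set (geom_realization V (non_cover_complex V E))
                homotopy_equivalent_space top_of_set (std_sphere d))"
proof -
  have "contractible_or_sphere (top_of_set (noncover_space V E))"
    using assms(1) by (intro contractible_or_sphere_noncover_space forest_imp_rank2_forest)
  then show ?thesis
    unfolding geom_realization_non_cover_complex contractible_or_sphere_def .
qed

end
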